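(* Let $n\ge1$ and let $f:I^n\to\mathbb{R}$ be a bounded function. Let $x=(x_1,\ldots,x_n)\in(0,1)^n$ be a point at which $f$ is (Fréchet) differentiable. Then for each $k=1,\ldots,n$, $$\lim_{m\to\infty}\frac{\partial\,\mathscr{B}^n_m(f)}{\partial x_k}(x)=\frac{\partial f}{\partial x_k}(x).$$
   Context: $I=[0,1]$. $b_{i,m}(t)=\binom{m}{i}t^i(1-t)^{m-i}$, $B^n_{i,m}(x)=\prod_k b_{i_k,m}(x_k)$ for $i\in\{0,\ldots,m\}^n$, and $\mathscr{B}^n_m(f)=\sum_i f(\tfrac{i}{m})B^n_{i,m}$ with $\tfrac im=(\tfrac{i_1}{m},\ldots,\tfrac{i_n}{m})$. *)

theory Defs
  imports "HOL-Analysis.Analysis"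
begin

text \<open>Multivariate Bernstein operator on the unit cube I^n, the dimension n being
the cardinality of the finite index type 'n.\<close>

definition multi_bernstein :: "nat \<Rightarrow> (real^'n::finite \<Rightarrow> real) \<Rightarrow> real^'n \<Rightarrow> real" where
  "multi_bernstein m f x =
     (\<Sum>i \<in> {i::'n \<Rightarrow> nat. \<forall>k. i k \<le> m}.
        f (\<chi> k. real (i k) / real m) * (\<Prod>k\<in>UNIV. Bernstein m (i k) (x $ k)))"

definition partial_deriv :: "(real^'n::finite \<Rightarrow> real) \<Rightarrow> 'n \<Rightarrow> real^'n \<Rightarrow> real" where
  "partial_deriv g k x = deriv (\<lambda>t. g (x + t *\<^sub>R axis k 1)) 0"

end

theory Submission
  imports Defs
begin

(* Write c = x_k (1 - x_k).  Differentiating the product basis in the k-th variable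
   shows that the k-th partial derivative of B_m(f) at x is the functional
     D_m(h) = (1/c) * sum_i h(i/m) w_i(x) (i_k - m x_k),
   where w_i(x) is the product Bernstein weight.  D_m is linear in h, vanishes on
   constants and reproduces linear maps exactly: D_m(y -> L(y - x)) = L(e_k).
   Splitting f = f(x) + L(. - x) + g with the first-order remainder g, it remains to
   show D_m(g) -> 0.  Near x we use |g(y)| <= eps |y - x|, away from x we use
   boundedness, and both pieces are controlled by the second and fourth central
   moments of the one-dimensional Bernstein distribution, which are O(1/m) and
   O(1/m^2). *)

definition unit_cube :: "(real^'n::finite) set" where
  "unit_cube = {y. \<forall>j. 0 \<le> y $ j \<and> y $ j \<le> 1}"

definition multi_index :: "nat \<Rightarrow> ('n::finite \<Rightarrow> nat) set" where
  "multi_index m = {i. \<forall>k. i k \<le> m}"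

definition grid_node :: "nat \<Rightarrow> ('n::finite \<Rightarrow> nat) \<Rightarrow> real^'n" where
  "grid_node m i = (\<chi> l. real (i l) / real m)"

definition bernstein_weight :: "nat \<Rightarrow> real^'n::finite \<Rightarrow> ('n \<Rightarrow> nat) \<Rightarrow> real" where
  "bernstein_weight m x i = (\<Prod>l\<in>UNIV. Bernstein m (i l) (x $ l))"

lemma multi_bernstein_eq:
  "multi_bernstein m f x = (\<Sum>i\<in>multi_index m. f (grid_node m i) * bernstein_weight m x i)"
  unfolding multi_bernstein_def multi_index_def grid_node_def bernstein_weight_def ..

lemma multi_index_PiE: "multi_index m = PiE UNIV (\<lambda>_. {..m})"
  by (auto simp: multi_index_def PiE_def Pi_def)

lemma sum_bernstein_weight_prod:
  "(\<Sum>i\<in>multi_index m. bernstein_weight m x i * (\<Prod>l\<in>UNIV. h l (i l)))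
   = (\<Prod>l\<in>UNIV. \<Sum>t\<le>m. Bernstein m t (x $ l) * h l t)"
  by (simp add: multi_index_PiE prod_sum_PiE bernstein_weight_def prod.distrib)

lemma sum_bernstein_weight_coord:
  "(\<Sum>i\<in>multi_index m. bernstein_weight m x i * \<phi> (i j)) = (\<Sum>t\<le>m. Bernstein m t (x $ j) * \<phi> t)"
proof -
  have "(\<Sum>i\<in>multi_index m. bernstein_weight m x i * \<phi> (i j))
      = (\<Prod>l\<in>UNIV. \<Sum>t\<le>m. Bernstein m t (x $ l) * (if l = j then \<phi> t else 1))"
    using sum_bernstein_weight_prod[of m x "\<lambda>l t. if l = j then \<phi> t else 1"] by simp
  also have "\<dots> = (\<Prod>l\<in>UNIV. if l = j then (\<Sum>t\<le>m. Bernstein m t (x $ j) * \<phi> t) else 1)"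
    by (intro prod.cong) auto
  finally show ?thesis by simp
qed

lemma sum_bernstein_weight_two_coords:
  assumes "j \<noteq> k"
  shows "(\<Sum>i\<in>multi_index m. bernstein_weight m x i * (\<phi> (i j) * \<psi> (i k)))
    = (\<Sum>t\<le>m. Bernstein m t (x $ j) * \<phi> t) * (\<Sum>t\<le>m. Bernstein m t (x $ k) * \<psi> t)"
proof -
  define h where "h l t = (if l = j then \<phi> t else 1) * (if l = k then \<psi> t else 1)" for l t
  have "(\<Sum>i\<in>multi_index m. bernstein_weight m x i * (\<phi> (i j) * \<psi> (i k)))
      = (\<Prod>l\<in>UNIV. \<Sum>t\<le>m. Bernstein m t (x $ l) * h l t)"
    using sum_bernstein_weight_prod[of m x h] by (simp add: h_def prod.distrib)
  also have "\<dots> = (\<Prod>l\<in>UNIV. (if l = j then (\<Sum>t\<le>m. Bernstein m t (x $ j) * \<phi> t) else 1)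
        * (if l = k then (\<Sum>t\<le>m. Bernstein m t (x $ k) * \<psi> t) else 1))"
    by (intro prod.cong) (use assms in \<open>auto simp: h_def\<close>)
  finally show ?thesis by (simp add: prod.distrib)
qed

lemma sum_binomial_Bernstein:
  "(\<Sum>t\<le>m. real (t choose r) * Bernstein m t x) = real (m choose r) * x ^ r"
proof (cases "r \<le> m")
  case False
  then show ?thesis by (auto intro!: sum.neutral simp: binomial_eq_0)
next
  case True
  have "(\<Sum>t\<le>m. real (t choose r) * Bernstein m t x) = (\<Sum>t\<in>{r..m}. real (t choose r) * Bernstein m t x)"
    by (rule sum.mono_neutral_right) (auto simp: binomial_eq_0)
  also have "\<dots> = (\<Sum>t\<in>{r..m}. real (m choose r) * x ^ r * Bernstein (m - r) (t - r) x)"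
  proof (rule sum.cong[OF refl])
    fix t assume t: "t \<in> {r..m}"
    have "(m choose t) * (t choose r) = (m choose r) * ((m - r) choose (t - r))"
      using choose_mult[of r t m] t by auto
    then have "real (m choose t) * real (t choose r) = real (m choose r) * real ((m - r) choose (t - r))"
      by (metis of_nat_mult)
    moreover have "x ^ t = x ^ r * x ^ (t - r)" "m - r - (t - r) = m - t"
      using t by (simp_all flip: power_add)
    ultimately show "real (t choose r) * Bernstein m t x = real (m choose r) * x ^ r * Bernstein (m - r) (t - r) x"
      unfolding Bernstein_def by (simp add: algebra_simps)
  qed
  also have "\<dots> = (\<Sum>s\<le>m - r. real (m choose r) * x ^ r * Bernstein (m - r) s x)"
    using sum.shift_bounds_cl_nat_ivl[of "\<lambda>t. real (m choose r) * x ^ r * Bernstein (m - r) (t - r) x" 0 r "m - r"] True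
    by (simp add: atMost_atLeast0)
  also have "\<dots> = real (m choose r) * x ^ r"
    by (simp flip: sum_distrib_left)
  finally show ?thesis .
qed

lemma sum_falling3_Bernstein:
  "(\<Sum>t\<le>m. real t * (real t - 1) * (real t - 2) * Bernstein m t x)
   = real m * (real m - 1) * (real m - 2) * x ^ 3"
proof -
  have choose3: "real (t choose 3) = real t * (real t - 1) * (real t - 2) / 6" for t
    by (simp add: binomial_gbinomial gbinomial_prod_rev eval_nat_numeral fact_numeral algebra_simps)
  show ?thesis
    using sum_binomial_Bernstein[where m=m and r=3 and x=x] unfolding choose3
    by (simp add: sum_divide_distrib[symmetric] field_simps)
qed

lemma sum_falling4_Bernstein:
  "(\<Sum>t\<le>m. real t * (real t - 1) * (real t - 2) * (real t - 3) * Bernstein m t x)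
   = real m * (real m - 1) * (real m - 2) * (real m - 3) * x ^ 4"
proof -
  have choose4: "real (t choose 4) = real t * (real t - 1) * (real t - 2) * (real t - 3) / 24" for t
    by (simp add: binomial_gbinomial gbinomial_prod_rev eval_nat_numeral fact_numeral algebra_simps)
  show ?thesis
    using sum_binomial_Bernstein[where m=m and r=4 and x=x] unfolding choose4
    by (simp add: sum_divide_distrib[symmetric] field_simps)
qed

lemma Bernstein_central_moment1: "(\<Sum>t\<le>m. Bernstein m t x * (real t - real m * x)) = 0"
  by (simp add: algebra_simps sum_subtractf sum_distrib_left[symmetric] sum_distrib_right[symmetric])

lemma Bernstein_central_moment2:
  "(\<Sum>t\<le>m. Bernstein m t x * (real t - real m * x) ^ 2) = real m * x * (1 - x)"
proof -
  define a where "a = real m * x"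
  have "Bernstein m t x * (real t - a) ^ 2 = real t * (real t - 1) * Bernstein m t x
     + (1 - 2 * a) * (real t * Bernstein m t x) + a ^ 2 * Bernstein m t x" for t
    by (simp add: power2_eq_square algebra_simps)
  then have "(\<Sum>t\<le>m. Bernstein m t x * (real t - a) ^ 2) =
     (\<Sum>t\<le>m. real t * (real t - 1) * Bernstein m t x) + (1 - 2 * a) * (\<Sum>t\<le>m. real t * Bernstein m t x)
     + a ^ 2 * (\<Sum>t\<le>m. Bernstein m t x)"
    by (simp only: sum.distrib flip: sum_distrib_left)
  also have "\<dots> = real m * x * (1 - x)"
    unfolding sum_kk_Bernstein sum_k_Bernstein sum_Bernstein a_def by (simp add: power2_eq_square algebra_simps)
  finally show ?thesis unfolding a_def .
qed

lemma Bernstein_central_moment4: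
  "(\<Sum>t\<le>m. Bernstein m t x * (real t - real m * x) ^ 4) =
   real m * x * (1 - x) * (1 + 3 * (real m - 2) * x * (1 - x))"
proof -
  define a where "a = real m * x"
  have "Bernstein m t x * (real t - a) ^ 4 =
      real t * (real t - 1) * (real t - 2) * (real t - 3) * Bernstein m t x
     + (6 - 4 * a) * (real t * (real t - 1) * (real t - 2) * Bernstein m t x)
     + (7 - 12 * a + 6 * a ^ 2) * (real t * (real t - 1) * Bernstein m t x)
     + (1 - 4 * a + 6 * a ^ 2 - 4 * a ^ 3) * (real t * Bernstein m t x) + a ^ 4 * Bernstein m t x" for t
    by algebra
  then have "(\<Sum>t\<le>m. Bernstein m t x * (real t - a) ^ 4) =
      (\<Sum>t\<le>m. real t * (real t - 1) * (real t - 2) * (real t - 3) * Bernstein m t x)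
     + (6 - 4 * a) * (\<Sum>t\<le>m. real t * (real t - 1) * (real t - 2) * Bernstein m t x)
     + (7 - 12 * a + 6 * a ^ 2) * (\<Sum>t\<le>m. real t * (real t - 1) * Bernstein m t x)
     + (1 - 4 * a + 6 * a ^ 2 - 4 * a ^ 3) * (\<Sum>t\<le>m. real t * Bernstein m t x)
     + a ^ 4 * (\<Sum>t\<le>m. Bernstein m t x)"
    by (simp only: sum.distrib flip: sum_distrib_left)
  also have "\<dots> = real m * x * (1 - x) * (1 + 3 * (real m - 2) * x * (1 - x))"
    unfolding sum_falling4_Bernstein sum_falling3_Bernstein sum_kk_Bernstein sum_k_Bernstein sum_Bernstein a_def
    by (simp add: power2_eq_square power4_eq_xxxx power3_eq_cube algebra_simps)
  finally show ?thesis unfolding a_def .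
qed

lemma Bernstein_scaled_central_moment:
  assumes "m > 0"
  shows "(\<Sum>t\<le>m. Bernstein m t x * (real t / real m - x) ^ p)
    = (\<Sum>t\<le>m. Bernstein m t x * (real t - real m * x) ^ p) / real m ^ p"
proof -
  have "real t / real m - x = (real t - real m * x) / real m" for t
    using assms by (simp add: field_simps)
  then show ?thesis by (simp add: power_divide sum_divide_distrib)
qed

lemma Bernstein_scaled_moment2:
  assumes "m > 0"
  shows "(\<Sum>t\<le>m. Bernstein m t x * (real t / real m - x) ^ 2) = x * (1 - x) / real m"
  unfolding Bernstein_scaled_central_moment[OF assms] Bernstein_central_moment2
  using assms by (simp add: power2_eq_square)

lemma Bernstein_scaled_moment4_le:
  assumes "0 \<le> x" "x \<le> 1" "m > 0"
  shows "(\<Sum>t\<le>m. Bernstein m t x * (real t / real m - x) ^ 4) \<le> 1 / real m ^ 2"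
proof -
  define p where "p = x * (1 - x)"
  define M where "M = real m"
  have p: "0 \<le> p" "p \<le> 1/4"
    using assms zero_le_power2[of "x - 1/2"] unfolding p_def power2_eq_square
    by (simp_all add: algebra_simps mult_left_le)
  have M: "M \<ge> 1" using assms M_def by simp
  have "M * p * (1 + 3 * (M - 2) * p) \<le> M * p + 3 * M ^ 2 * p ^ 2"
    using p M by (simp add: power2_eq_square algebra_simps)
  also have "\<dots> \<le> M / 4 + 3 * M ^ 2 / 16"
  proof -
    have "p ^ 2 \<le> (1/4) ^ 2" using p by (intro power_mono) auto
    then have "3 * M ^ 2 * p ^ 2 \<le> 3 * M ^ 2 * (1/4) ^ 2" by (intro mult_left_mono) auto
    moreover have "M * p \<le> M * (1/4)" using p M by (intro mult_left_mono) auto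
    ultimately show ?thesis by (simp add: power2_eq_square)
  qed
  also have "\<dots> \<le> M ^ 2"
  proof -
    have "M \<le> M * M" using M mult_left_mono[of 1 M M] by simp
    then show ?thesis using M unfolding power2_eq_square by linarith
  qed
  finally have "M * p * (1 + 3 * (M - 2) * p) / M ^ 4 \<le> M ^ 2 / M ^ 4"
    by (simp add: divide_right_mono)
  also have "\<dots> = 1 / M ^ 2" using M by (simp add: field_simps eval_nat_numeral)
  finally show ?thesis
    unfolding Bernstein_scaled_central_moment[OF assms(3)] Bernstein_central_moment4 p_def M_def
    by (simp add: algebra_simps)
qed

lemma grid_node_in_unit_cube:
  assumes "m > 0" "i \<in> multi_index m"
  shows "grid_node m i \<in> unit_cube"
  using assms by (simp add: grid_node_def multi_index_def unit_cube_def)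

lemma weighted_moment2_le:
  assumes "x \<in> unit_cube" "m > 0"
  shows "(\<Sum>i\<in>multi_index m. bernstein_weight m x i * (grid_node m i $ j - x $ j) ^ 2) \<le> 1 / real m"
proof -
  have "x $ j * (1 - x $ j) \<le> 1 * 1"
    using assms(1) by (intro mult_mono) (auto simp: unit_cube_def)
  then show ?thesis
    using assms(2) sum_bernstein_weight_coord[of m x "\<lambda>t. (real t / real m - x $ j) ^ 2" j]
    by (simp add: grid_node_def Bernstein_scaled_moment2 divide_right_mono)
qed

lemma weighted_moment4_le:
  assumes "x \<in> unit_cube" "m > 0"
  shows "(\<Sum>i\<in>multi_index m. bernstein_weight m x i * (grid_node m i $ j - x $ j) ^ 4) \<le> 1 / real m ^ 2"
  using assms sum_bernstein_weight_coord[of m x "\<lambda>t. (real t / real m - x $ j) ^ 4" j]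
    Bernstein_scaled_moment4_le[of "x $ j" m]
  by (simp add: grid_node_def unit_cube_def)

lemma has_real_derivative_Bernstein:
  assumes "0 < t" "t < 1"
  shows "(Bernstein m i has_real_derivative Bernstein m i t * (real i - real m * t) / (t * (1 - t))) (at t)"
proof (cases "i \<le> m")
  case False
  then have "Bernstein m i = (\<lambda>_. 0)" by (auto simp: Bernstein_def binomial_eq_0)
  then show ?thesis by simp
next
  case True
  define C where "C = real (m choose i)"
  define D where "D = C * (real i * t ^ (i - 1) * (1 - t) ^ (m - i) - real (m - i) * t ^ i * (1 - t) ^ (m - i - 1))"
  have deriv: "(Bernstein m i has_real_derivative D) (at t)"
    unfolding Bernstein_def[abs_def] D_def C_def
    by (auto intro!: derivative_eq_intros simp: algebra_simps)
  have "D * (t * (1 - t)) = Bernstein m i t * (real i - real m * t)"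
  proof -
    define P Q R S where "P = t ^ i" and "Q = t ^ (i - 1)"
      and "R = (1 - t) ^ (m - i)" and "S = (1 - t) ^ (m - i - 1)"
    have QP: "real i * Q * t = real i * P" unfolding P_def Q_def by (cases i) auto
    have SR: "(real m - real i) * S * (1 - t) = (real m - real i) * R"
      using True unfolding R_def S_def by (cases "m - i") (auto simp: of_nat_diff)
    have "D * (t * (1 - t)) = C * R * (1 - t) * (real i * Q * t) - C * P * t * ((real m - real i) * S * (1 - t))"
      using True unfolding D_def P_def Q_def R_def S_def by (simp add: of_nat_diff algebra_simps)
    also have "\<dots> = C * P * R * (real i - real m * t)"
      unfolding QP SR by (simp add: algebra_simps)
    finally show ?thesis unfolding Bernstein_def C_def P_def R_def by simp
  qed
  then have "D = Bernstein m i t * (real i - real m * t) / (t * (1 - t))"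
    using assms by (simp add: eq_divide_eq)
  then show ?thesis using deriv by simp
qed

(* The functional D_m(h) which gives the k-th partial derivative of B_m(h) at x. *)
definition bernstein_partial :: "nat \<Rightarrow> 'n::finite \<Rightarrow> real^'n \<Rightarrow> (real^'n \<Rightarrow> real) \<Rightarrow> real" where
  "bernstein_partial m k x h =
     (\<Sum>i\<in>multi_index m. h (grid_node m i) * bernstein_weight m x i * (real (i k) - real m * x $ k))
     / (x $ k * (1 - x $ k))"

lemma bernstein_weight_split:
  "bernstein_weight m x i = Bernstein m (i k) (x $ k) * (\<Prod>l\<in>UNIV - {k}. Bernstein m (i l) (x $ l))"
  unfolding bernstein_weight_def by (rule prod.remove) auto

(* Only the k-th factor depends on the k-th coordinate, so differentiating it
   term by term gives D_m(f). *)
lemma partial_deriv_multi_bernstein: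
  fixes x :: "real^'n::finite"
  assumes "0 < x $ k" "x $ k < 1"
  shows "partial_deriv (multi_bernstein m f) k x = bernstein_partial m k x f"
proof -
  define R where "R i = (\<Prod>l\<in>UNIV - {k}. Bernstein m (i l) (x $ l))" for i :: "'n \<Rightarrow> nat"
  define d where "d j = Bernstein m j (x $ k) * (real j - real m * x $ k) / (x $ k * (1 - x $ k))" for j
  have line: "multi_bernstein m f (x + s *\<^sub>R axis k 1) =
      (\<Sum>i\<in>multi_index m. f (grid_node m i) * R i * Bernstein m (i k) (s + x $ k))" for s
  proof -
    have "bernstein_weight m (x + s *\<^sub>R axis k 1) i = Bernstein m (i k) (s + x $ k) * R i" for i
      unfolding bernstein_weight_split[of _ _ _ k] R_def
      by (auto simp: axis_def add.commute intro!: prod.cong)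
    then show ?thesis unfolding multi_bernstein_eq by (simp add: mult_ac)
  qed
  have "((\<lambda>s. Bernstein m j (s + x $ k)) has_real_derivative d j) (at 0)" for j
    using has_real_derivative_Bernstein[OF assms, of m j] DERIV_shift[of "Bernstein m j" "d j" 0 "x $ k"]
    by (simp add: d_def)
  then have "((\<lambda>s. multi_bernstein m f (x + s *\<^sub>R axis k 1)) has_real_derivative
      (\<Sum>i\<in>multi_index m. f (grid_node m i) * R i * d (i k))) (at 0)"
    unfolding line by (intro DERIV_sum DERIV_cmult)
  then have "partial_deriv (multi_bernstein m f) k x = (\<Sum>i\<in>multi_index m. f (grid_node m i) * R i * d (i k))"
    unfolding partial_deriv_def by (rule DERIV_imp_deriv)
  also have "\<dots> = bernstein_partial m k x f"
    unfolding bernstein_partial_def bernstein_weight_split[of _ _ _ k] d_def R_def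
    by (simp add: sum_divide_distrib mult_ac)
  finally show ?thesis .
qed

(* D_m annihilates constants: the first central moment vanishes. *)
lemma sum_bernstein_weight_centered:
  "(\<Sum>i\<in>multi_index m. bernstein_weight m x i * (real (i k) - real m * x $ k)) = 0"
  using sum_bernstein_weight_coord[of m x "\<lambda>t. real t - real m * x $ k" k] Bernstein_central_moment1
  by simp

(* The weighted displacements of the nodes add up to c e_k: the k-th component is
   the second central moment, the others vanish by independence. *)
lemma sum_bernstein_weight_displacement:
  fixes x :: "real^'n::finite"
  assumes "m > 0"
  shows "(\<Sum>i\<in>multi_index m. (bernstein_weight m x i * (real (i k) - real m * x $ k)) *\<^sub>R (grid_node m i - x))
     = (x $ k * (1 - x $ k)) *\<^sub>R axis k 1"
proof (rule iffD2[OF vec_eq_iff], rule allI)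
  fix j
  show "(\<Sum>i\<in>multi_index m. (bernstein_weight m x i * (real (i k) - real m * x $ k)) *\<^sub>R (grid_node m i - x)) $ j
     = ((x $ k * (1 - x $ k)) *\<^sub>R axis k 1) $ j"
  proof (cases "j = k")
    case True
    have "(\<Sum>i\<in>multi_index m. bernstein_weight m x i * ((real (i k) - real m * x $ k) * (real (i k) / real m - x $ k)))
        = (\<Sum>t\<le>m. Bernstein m t (x $ k) * ((real t - real m * x $ k) * (real t / real m - x $ k)))"
      by (rule sum_bernstein_weight_coord)
    also have "\<dots> = (\<Sum>t\<le>m. Bernstein m t (x $ k) * (real t - real m * x $ k) ^ 2) / real m"
    proof -
      have "real t / real m - x $ k = (real t - real m * x $ k) / real m" for t
        using assms by (simp add: field_simps)
      then show ?thesis by (simp add: sum_divide_distrib power2_eq_square)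
    qed
    also have "\<dots> = x $ k * (1 - x $ k)"
      using assms by (simp add: Bernstein_central_moment2)
    finally show ?thesis
      using True by (simp add: grid_node_def axis_def mult.assoc)
  next
    case False
    have "(\<Sum>i\<in>multi_index m. bernstein_weight m x i * ((real (i j) / real m - x $ j) * (real (i k) - real m * x $ k)))
        = (\<Sum>t\<le>m. Bernstein m t (x $ j) * (real t / real m - x $ j)) * 0"
      using sum_bernstein_weight_two_coords[OF False, where \<phi>="\<lambda>t. real t / real m - x $ j"
          and \<psi>="\<lambda>t. real t - real m * x $ k"] Bernstein_central_moment1[of m "x $ k"]
      by simp
    then show ?thesis
      using False by (simp add: grid_node_def axis_def mult_ac)
  qed
qed

lemma bernstein_partial_add:
  "bernstein_partial m k x (\<lambda>y. g y + h y) = bernstein_partial m k x g + bernstein_partial m k x h"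
  by (simp add: bernstein_partial_def distrib_right sum.distrib add_divide_distrib)

lemma bernstein_partial_affine:
  fixes x :: "real^'n::finite"
  assumes "m > 0" "0 < x $ k" "x $ k < 1" "linear L"
  shows "bernstein_partial m k x (\<lambda>y. a + L (y - x)) = L (axis k 1)"
proof -
  define W where "W i = bernstein_weight m x i * (real (i k) - real m * x $ k)" for i
  have "(\<Sum>i\<in>multi_index m. (a + L (grid_node m i - x)) * W i)
      = a * (\<Sum>i\<in>multi_index m. W i) + (\<Sum>i\<in>multi_index m. W i * L (grid_node m i - x))"
    by (simp add: algebra_simps sum.distrib sum_distrib_left)
  also have "\<dots> = a * (\<Sum>i\<in>multi_index m. W i) + L (\<Sum>i\<in>multi_index m. W i *\<^sub>R (grid_node m i - x))"
    by (simp add: linear_sum[OF assms(4)] linear_scale[OF assms(4)])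
  also have "\<dots> = (x $ k * (1 - x $ k)) * L (axis k 1)"
    unfolding W_def sum_bernstein_weight_centered sum_bernstein_weight_displacement[OF assms(1)]
    by (simp add: linear_scale[OF assms(4)])
  finally show ?thesis
    using assms(2,3) by (simp add: bernstein_partial_def W_def mult.assoc)
qed

lemma norm_mult_component_le:
  fixes v :: "real^'n::finite"
  shows "norm v * \<bar>v $ k\<bar> \<le> (\<Sum>j\<in>UNIV. (v $ j) ^ 2)"
proof -
  have "norm v * \<bar>v $ k\<bar> \<le> norm v * norm v"
    by (intro mult_left_mono component_le_norm_cart) auto
  also have "\<dots> = v \<bullet> v"
    by (simp add: dot_square_norm power2_eq_square)
  also have "\<dots> = (\<Sum>j\<in>UNIV. (v $ j) ^ 2)"
    by (simp add: inner_vec_def power2_eq_square)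
  finally show ?thesis .
qed

(* Away from x the fourth moment dominates: if |v| >= delta then some coordinate
   has |v_j| >= delta/n. *)
lemma sum_fourth_powers_ge_if_norm_ge:
  fixes v :: "real^'n::finite"
  assumes "0 < \<delta>" "\<delta> \<le> norm v"
  shows "1 \<le> (real CARD('n) / \<delta>) ^ 4 * (\<Sum>j\<in>UNIV. (v $ j) ^ 4)"
proof -
  define n where "n = real CARD('n)"
  have n: "n > 0" unfolding n_def by simp
  have "Max (range (\<lambda>l. \<bar>v $ l\<bar>)) \<in> range (\<lambda>l. \<bar>v $ l\<bar>)" by (rule Max_in) auto
  then obtain j where j_max: "\<bar>v $ j\<bar> = Max (range (\<lambda>l. \<bar>v $ l\<bar>))" by (metis rangeE)
  have j: "\<bar>v $ l\<bar> \<le> \<bar>v $ j\<bar>" for l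
    unfolding j_max by (rule Max_ge) auto
  have "\<delta> \<le> (\<Sum>l\<in>UNIV. \<bar>v $ l\<bar>)" using assms(2) norm_le_l1_cart[of v] by linarith
  also have "\<dots> \<le> n * \<bar>v $ j\<bar>" using sum_bounded_above[of UNIV "\<lambda>l. \<bar>v $ l\<bar>" "\<bar>v $ j\<bar>"] j
    by (simp add: n_def)
  finally have "(\<delta> / n) ^ 4 \<le> \<bar>v $ j\<bar> ^ 4"
    using assms(1) n by (intro power_mono) (auto simp: field_simps)
  also have "\<dots> \<le> (\<Sum>l\<in>UNIV. (v $ l) ^ 4)"
    unfolding power_even_abs_numeral[OF even_numeral] by (rule member_le_sum) auto
  finally show ?thesis
    using assms(1) n by (simp add: n_def[symmetric] power_divide field_simps)
qed

lemma remainder_offset_bound: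
  fixes x y :: "real^'n::finite" and g :: "real^'n \<Rightarrow> real"
  assumes "\<bar>y $ k - x $ k\<bar> \<le> 1" "0 \<le> \<epsilon>" "0 < \<delta>" "0 \<le> G"
    and near: "norm (y - x) < \<delta> \<Longrightarrow> \<bar>g y\<bar> \<le> \<epsilon> * norm (y - x)"
    and far: "\<bar>g y\<bar> \<le> G"
  shows "\<bar>g y\<bar> * \<bar>y $ k - x $ k\<bar> \<le>
    \<epsilon> * (\<Sum>j\<in>UNIV. (y $ j - x $ j) ^ 2) + G * (real CARD('n) / \<delta>) ^ 4 * (\<Sum>j\<in>UNIV. (y $ j - x $ j) ^ 4)"
  (is "_ \<le> ?A + ?B")
proof -
  have A: "0 \<le> ?A" and B: "0 \<le> ?B"
    using assms(2-4) by (auto intro!: mult_nonneg_nonneg sum_nonneg)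
  show ?thesis
  proof (cases "norm (y - x) < \<delta>")
    case True
    have "\<bar>g y\<bar> * \<bar>y $ k - x $ k\<bar> \<le> \<epsilon> * (norm (y - x) * \<bar>(y - x) $ k\<bar>)"
      using mult_right_mono[OF near[OF True] abs_ge_zero] by (simp add: mult.assoc)
    also have "\<dots> \<le> ?A"
      using norm_mult_component_le[of "y - x" k] assms(2) by (simp add: mult_left_mono)
    finally show ?thesis using B by linarith
  next
    case False
    have "\<bar>g y\<bar> * \<bar>y $ k - x $ k\<bar> \<le> G * 1"
      using assms(1,4) far by (intro mult_mono) auto
    also have "\<dots> \<le> ?B"
      using mult_left_mono[OF sum_fourth_powers_ge_if_norm_ge[of \<delta> "y - x"] assms(4)] False assms(3)
      by (simp add: mult.assoc)
    finally show ?thesis using A by linarith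
  qed
qed

(* Quantitative bound on D_m(g) for a remainder g that is small near x and bounded
   on the cube; the moment estimates turn the pointwise bound into O(eps + 1/m). *)
lemma bernstein_partial_bound:
  fixes x :: "real^'n::finite" and g :: "real^'n \<Rightarrow> real"
  assumes x: "x \<in> unit_cube" "0 < x $ k" "x $ k < 1"
    and m: "m > 0" and "0 \<le> \<epsilon>" "0 < \<delta>" "0 \<le> G"
    and near: "\<And>y. norm (y - x) < \<delta> \<Longrightarrow> \<bar>g y\<bar> \<le> \<epsilon> * norm (y - x)"
    and far: "\<And>y. y \<in> unit_cube \<Longrightarrow> \<bar>g y\<bar> \<le> G"
  shows "\<bar>bernstein_partial m k x g\<bar>
    \<le> real CARD('n) * (\<epsilon> + G * (real CARD('n) / \<delta>) ^ 4 / real m) / (x $ k * (1 - x $ k))"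
proof -
  define w where "w = bernstein_weight m x"
  define d where "d i j = grid_node m i $ j - x $ j" for i j
  define K where "K = (real CARD('n) / \<delta>) ^ 4"
  define \<Phi> where "\<Phi> i = \<epsilon> * (\<Sum>j\<in>UNIV. (d i j) ^ 2) + G * K * (\<Sum>j\<in>UNIV. (d i j) ^ 4)" for i
  have w: "0 \<le> w i" for i
    using x(1) unfolding w_def bernstein_weight_def unit_cube_def by (auto intro!: prod_nonneg Bernstein_nonneg)
  have term_bound: "\<bar>g (grid_node m i) * w i * (real (i k) - real m * x $ k)\<bar> \<le> real m * (w i * \<Phi> i)"
    if i: "i \<in> multi_index m" for i
  proof -
    have node: "grid_node m i \<in> unit_cube" by (rule grid_node_in_unit_cube[OF m i])
    have "\<bar>d i k\<bar> \<le> 1"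
      using node x(1) unfolding d_def unit_cube_def abs_le_iff by (smt (verit) mem_Collect_eq)
    then have offset: "\<bar>g (grid_node m i)\<bar> * \<bar>d i k\<bar> \<le> \<Phi> i"
      unfolding \<Phi>_def K_def d_def using assms(5-7) near far[OF node] by (intro remainder_offset_bound) auto
    have "real (i k) - real m * x $ k = real m * d i k"
      using m by (simp add: d_def grid_node_def field_simps)
    then have "\<bar>g (grid_node m i) * w i * (real (i k) - real m * x $ k)\<bar>
        = real m * (w i * (\<bar>g (grid_node m i)\<bar> * \<bar>d i k\<bar>))"
      using w[of i] by (simp add: abs_mult mult_ac)
    also have "\<dots> \<le> real m * (w i * \<Phi> i)"
      using offset w[of i] by (intro mult_left_mono) auto
    finally show ?thesis .
  qed
  have "(\<Sum>i\<in>multi_index m. w i * \<Phi> i)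
      = (\<Sum>j\<in>UNIV. \<epsilon> * (\<Sum>i\<in>multi_index m. w i * (d i j) ^ 2) + G * K * (\<Sum>i\<in>multi_index m. w i * (d i j) ^ 4))"
    unfolding \<Phi>_def by (simp add: algebra_simps sum.distrib sum_distrib_left sum.swap[of _ UNIV])
  also have "\<dots> \<le> (\<Sum>j\<in>(UNIV::'n set). \<epsilon> * (1 / real m) + G * K * (1 / real m ^ 2))"
    unfolding w_def d_def K_def using assms(5-7) x(1) m
    by (intro sum_mono add_mono mult_left_mono weighted_moment2_le weighted_moment4_le) auto
  finally have moments: "(\<Sum>i\<in>multi_index m. w i * \<Phi> i) \<le> real CARD('n) * (\<epsilon> / real m + G * K / real m ^ 2)"
    by simp
  have "\<bar>\<Sum>i\<in>multi_index m. g (grid_node m i) * w i * (real (i k) - real m * x $ k)\<bar>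
      \<le> real m * (\<Sum>i\<in>multi_index m. w i * \<Phi> i)"
    using term_bound by (simp add: sum_distrib_left order_trans[OF sum_abs sum_mono])
  also have "\<dots> \<le> real m * (real CARD('n) * (\<epsilon> / real m + G * K / real m ^ 2))"
    using moments by (simp add: mult_left_mono)
  also have "\<dots> = real CARD('n) * (\<epsilon> + G * K / real m)"
    using m by (simp add: field_simps power2_eq_square)
  finally show ?thesis
    using x(2,3) by (simp add: bernstein_partial_def w_def K_def divide_right_mono abs_divide)
qed

lemma bernstein_partial_tendsto_zero:
  fixes x :: "real^'n::finite" and g :: "real^'n \<Rightarrow> real"
  assumes x: "x \<in> unit_cube" "0 < x $ k" "x $ k < 1"
    and bounded: "\<And>y. y \<in> unit_cube \<Longrightarrow> \<bar>g y\<bar> \<le> G"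
    and little_o: "\<And>\<epsilon>. \<epsilon> > 0 \<Longrightarrow> \<exists>\<delta>>0. \<forall>y. norm (y - x) < \<delta> \<longrightarrow> \<bar>g y\<bar> \<le> \<epsilon> * norm (y - x)"
  shows "(\<lambda>m. bernstein_partial m k x g) \<longlonglongrightarrow> 0"
proof (rule tendstoI)
  fix r :: real assume "r > 0"
  define n where "n = real CARD('n)"
  define c where "c = x $ k * (1 - x $ k)"
  have "n > 0" "c > 0" using x(2,3) by (simp_all add: n_def c_def)
  define \<epsilon> where "\<epsilon> = r * c / (2 * n)"
  have "\<epsilon> > 0" using \<open>r > 0\<close> \<open>n > 0\<close> \<open>c > 0\<close> by (simp add: \<epsilon>_def)
  then obtain \<delta> where "\<delta> > 0" and near: "\<And>y. norm (y - x) < \<delta> \<Longrightarrow> \<bar>g y\<bar> \<le> \<epsilon> * norm (y - x)"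
    using little_o by blast
  have "0 \<le> G" using bounded[OF x(1)] by linarith
  have "eventually (\<lambda>m. G * (n / \<delta>) ^ 4 / real m < \<epsilon>) sequentially"
    using order_tendstoD(2)[OF lim_const_over_n \<open>\<epsilon> > 0\<close>] .
  moreover have "eventually (\<lambda>m. m > 0) sequentially" by (rule eventually_gt_at_top)
  ultimately show "eventually (\<lambda>m. dist (bernstein_partial m k x g) 0 < r) sequentially"
  proof eventually_elim
    case (elim m)
    have "\<bar>bernstein_partial m k x g\<bar> \<le> n * (\<epsilon> + G * (n / \<delta>) ^ 4 / real m) / c"
      unfolding n_def c_def
      using \<open>\<epsilon> > 0\<close> \<open>\<delta> > 0\<close> \<open>0 \<le> G\<close> near bounded
      by (intro bernstein_partial_bound[OF x elim(2)]) auto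
    also have "\<dots> < n * (2 * \<epsilon>) / c"
      using elim(1) \<open>n > 0\<close> \<open>c > 0\<close> by (intro divide_strict_right_mono mult_strict_left_mono) auto
    also have "\<dots> = r"
      using \<open>n > 0\<close> \<open>c > 0\<close> by (simp add: \<epsilon>_def)
    finally show ?case by simp
  qed
qed

lemma partial_deriv_has_derivative:
  fixes f :: "real^'n::finite \<Rightarrow> real"
  assumes "(f has_derivative L) (at x)"
  shows "partial_deriv f k x = L (axis k 1)"
proof -
  have line: "((\<lambda>t::real. x + t *\<^sub>R axis k 1) has_derivative (\<lambda>t. t *\<^sub>R axis k 1)) (at 0)"
    by (auto intro!: derivative_eq_intros)
  have "((\<lambda>t. f (x + t *\<^sub>R axis k 1)) has_derivative (\<lambda>t. L (t *\<^sub>R axis k 1))) (at 0)"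
    using diff_chain_at[OF line, of f L] assms by (simp add: comp_def)
  moreover have "(\<lambda>t. L (t *\<^sub>R axis k 1)) = (*) (L (axis k 1))"
    using linear_scale[OF bounded_linear.linear[OF has_derivative_bounded_linear[OF assms]]] by auto
  ultimately have "((\<lambda>t. f (x + t *\<^sub>R axis k 1)) has_real_derivative L (axis k 1)) (at 0)"
    by (simp add: has_field_derivative_def)
  then show ?thesis unfolding partial_deriv_def by (rule DERIV_imp_deriv)
qed

lemma first_order_remainder_bounded:
  fixes f :: "real^'n::finite \<Rightarrow> real"
  assumes "bounded (f ` unit_cube)" "x \<in> unit_cube" "bounded_linear L"
  shows "\<exists>G. \<forall>y\<in>unit_cube. \<bar>f y - f x - L (y - x)\<bar> \<le> G"
proof -
  obtain F where F: "\<And>y. y \<in> unit_cube \<Longrightarrow> \<bar>f y\<bar> \<le> F"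
    using assms(1) unfolding bounded_iff by auto
  have "unit_cube = cbox (0 :: real^'n) 1"
    by (auto simp: unit_cube_def mem_box_cart)
  then have "bounded (unit_cube :: (real^'n) set)" by (metis bounded_cbox)
  then obtain B where B: "\<And>y :: real^'n. y \<in> unit_cube \<Longrightarrow> norm y \<le> B"
    unfolding bounded_iff by blast
  obtain K where K: "\<And>v. norm (L v) \<le> norm v * K" "K > 0"
    using bounded_linear.pos_bounded[OF assms(3)] by blast
  have "\<bar>f y - f x - L (y - x)\<bar> \<le> 2 * F + 2 * B * K" if "y \<in> unit_cube" for y
  proof -
    have "\<bar>L (y - x)\<bar> \<le> (norm y + norm x) * K"
      using K norm_triangle_ineq4[of y x] by (smt (verit) mult_right_mono real_norm_def)
    also have "\<dots> \<le> 2 * B * K"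
      using B[OF that] B[OF assms(2)] K(2) by (intro mult_right_mono) auto
    finally show ?thesis using F[OF that] F[OF assms(2)] by linarith
  qed
  then show ?thesis by blast
qed

theorem mainTheorem8:
  fixes f :: "real^'n::finite \<Rightarrow> real" and x :: "real^'n" and k :: 'n
  assumes "bounded (f ` {y. \<forall>j. 0 \<le> y $ j \<and> y $ j \<le> 1})"
    and "\<forall>j. 0 < x $ j \<and> x $ j < 1"
    and "f differentiable (at x)"
  shows "(\<lambda>m. partial_deriv (multi_bernstein m f) k x) \<longlonglongrightarrow> partial_deriv f k x"
proof -
  have x: "x \<in> unit_cube" "0 < x $ k" "x $ k < 1"
    using assms(2) by (auto simp: unit_cube_def less_imp_le)
  obtain L where L: "(f has_derivative L) (at x)"
    using assms(3) by (auto simp: differentiable_def)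
  have L_linear: "bounded_linear L" by (rule has_derivative_bounded_linear[OF L])
  define g where "g y = f y - f x - L (y - x)" for y
  obtain G where G: "\<And>y. y \<in> unit_cube \<Longrightarrow> \<bar>g y\<bar> \<le> G"
    using first_order_remainder_bounded[OF _ x(1) L_linear] assms(1) unfolding g_def unit_cube_def by blast
  have little_o: "\<exists>\<delta>>0. \<forall>y. norm (y - x) < \<delta> \<longrightarrow> \<bar>g y\<bar> \<le> \<epsilon> * norm (y - x)" if "\<epsilon> > 0" for \<epsilon>
    using L that unfolding has_derivative_at_alt g_def by simp
  have "(\<lambda>m. bernstein_partial m k x g + L (axis k 1)) \<longlonglongrightarrow> 0 + L (axis k 1)"
    by (intro tendsto_add tendsto_const bernstein_partial_tendsto_zero[OF x G little_o])
  moreover have "eventually (\<lambda>m. bernstein_partial m k x g + L (axis k 1)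
      = partial_deriv (multi_bernstein m f) k x) sequentially"
  proof (rule eventually_mono[OF eventually_gt_at_top[of 0]])
    fix m :: nat assume "m > 0"
    have "f = (\<lambda>y. g y + (f x + L (y - x)))" by (simp add: g_def)
    then show "bernstein_partial m k x g + L (axis k 1) = partial_deriv (multi_bernstein m f) k x"
      using partial_deriv_multi_bernstein[OF x(2,3)] bernstein_partial_add
        bernstein_partial_affine[OF \<open>m > 0\<close> x(2,3) bounded_linear.linear[OF L_linear]] by metis
  qed
  ultimately show ?thesis
    using partial_deriv_has_derivative[OF L] by (simp add: Lim_transform_eventually)
qed
end
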